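(* Let $\gamma>0$, $R>0$, $\Omega=B(0,R)\subset\mathbb{R}^2$, and let $m>8\pi(1+\gamma)$. Then there exists a sequence $(u_k,v_k)$ of nonnegative radially symmetric functions on $\Omega$ with $\int_\Omega u_k\,dx=m$ for all $k$, such that $\mathcal{F}(u_k,v_k)\to-\infty$ as $k\to\infty$.
   Context: $\mathcal{F}(u,v):=\int_\Omega G(u)dx-\int_\Omega uv\,dx+\frac12\int_\Omega|\nabla v|^2+\frac12\int_\Omega v^2$, where $G(u)=\gamma(1+u)\ln(1+u)+u\ln u-u(\gamma(1+\ln2)+1)-\gamma\ln2+\gamma+1$. *)

theory Defs
  imports "HOL-Analysis.Analysis"
begin

type_synonym R2 = "real ^ 2"

definition Gfun :: "real \<Rightarrow> real \<Rightarrow> real" where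
  "Gfun \<gamma> u = \<gamma> * (1 + u) * ln (1 + u) + u * ln u - u * (\<gamma> * (1 + ln 2) + 1)
                 - \<gamma> * ln 2 + \<gamma> + 1"

definition grad_sq :: "(R2 \<Rightarrow> real) \<Rightarrow> R2 \<Rightarrow> real" where
  "grad_sq v x = (\<Sum>i\<in>UNIV. (frechet_derivative v (at x) (axis i 1))\<^sup>2)"

definition Ffun :: "real \<Rightarrow> real \<Rightarrow> (R2 \<Rightarrow> real) \<Rightarrow> (R2 \<Rightarrow> real) \<Rightarrow> real" where
  "Ffun \<gamma> R u v =
     integral (ball 0 R) (\<lambda>x. Gfun \<gamma> (u x))
     - integral (ball 0 R) (\<lambda>x. u x * v x)
     + 1/2 * integral (ball 0 R) (\<lambda>x. grad_sq v x)
     + 1/2 * integral (ball 0 R) (\<lambda>x. (v x)\<^sup>2)"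

definition radial_on :: "R2 set \<Rightarrow> (R2 \<Rightarrow> real) \<Rightarrow> bool" where
  "radial_on S f \<longleftrightarrow> (\<forall>x\<in>S. \<forall>y\<in>S. norm x = norm y \<longrightarrow> f x = f y)"

definition admissible :: "real \<Rightarrow> real \<Rightarrow> (R2 \<Rightarrow> real) \<Rightarrow> (R2 \<Rightarrow> real) \<Rightarrow> bool" where
  "admissible \<gamma> R u v \<longleftrightarrow>
     (\<forall>x\<in>ball 0 R. u x \<ge> 0 \<and> v x \<ge> 0) \<and>
     radial_on (ball 0 R) u \<and> radial_on (ball 0 R) v \<and>
     continuous_on (cball 0 R) u \<and> continuous_on (cball 0 R) v \<and>
     (\<forall>x\<in>ball 0 R. v differentiable (at x)) \<and>
     u absolutely_integrable_on ball 0 R \<and>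
     (\<lambda>x. Gfun \<gamma> (u x)) absolutely_integrable_on ball 0 R \<and>
     (\<lambda>x. u x * v x) absolutely_integrable_on ball 0 R \<and>
     (\<lambda>x. grad_sq v x) absolutely_integrable_on ball 0 R \<and>
     (\<lambda>x. (v x)\<^sup>2) absolutely_integrable_on ball 0 R"

end

theory Submission
  imports Defs "HOL-Real_Asymp.Real_Asymp"
begin

text \<open>Concentrate the mass \<open>m\<close> in a tent of radius \<open>\<epsilon>\<^sub>k = R/b\<^sup>k\<close> and pair it with the
  logarithmic potential \<open>v\<^sub>k = A/2 \<cdot> ln ((R\<^sup>2 + \<epsilon>\<^sub>k\<^sup>2)/(|x|\<^sup>2 + \<epsilon>\<^sub>k\<^sup>2))\<close>. Each step
  \<open>k \<mapsto> k+1\<close> raises the entropy \<open>\<integral> G(u)\<close> by at most \<open>2(1+\<gamma>) m ln b\<close>, lowers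
  \<open>-\<integral> u v\<close> by \<open>m A ln b\<close> and raises the Dirichlet energy by at most \<open>A\<^sup>2\<pi>(b\<^sup>2-1)/2\<close>,
  while \<open>\<integral> v\<^sup>2\<close> stays bounded. Hence \<open>\<F>(u\<^sub>k,v\<^sub>k) \<le> C + k D\<close>, and for \<open>A = m/(2\<pi>)\<close> and
  \<open>b\<close> close to 1 the slope \<open>D\<close> is negative precisely because \<open>m > 8\<pi>(1+\<gamma>)\<close>.\<close>

lemma continuous_on_cball_absolutely_integrable_on_ball:
  fixes f :: "'a::euclidean_space \<Rightarrow> real"
  assumes "continuous_on (cball 0 R) f"
  shows "f absolutely_integrable_on ball 0 R"
proof -
  obtain B where B: "\<And>x. x \<in> cball 0 R \<Longrightarrow> norm (f x) \<le> B"
    using compact_imp_bounded[OF compact_continuous_image[OF assms compact_cball]]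
    unfolding bounded_iff by (metis image_eqI real_norm_def)
  show ?thesis
  proof (rule measurable_bounded_by_integrable_imp_absolutely_integrable[where g="\<lambda>x. B"])
    show "f \<in> borel_measurable (lebesgue_on (ball 0 R))"
      by (rule continuous_imp_measurable_on_sets_lebesgue)
         (auto intro: continuous_on_subset[OF assms])
    show "(\<lambda>x. B) integrable_on ball 0 R"
      by (rule integrable_on_const) (simp add: bounded_set_imp_lmeasurable)
  qed (use B in auto)
qed

lemma continuous_on_integrable_on_ball:
  fixes f :: "'a::euclidean_space \<Rightarrow> real"
  assumes "continuous_on UNIV f"
  shows "f integrable_on ball 0 R"
  using continuous_on_cball_absolutely_integrable_on_ball[OF continuous_on_subset[OF assms]]
  unfolding absolutely_integrable_on_def by blast

lemma integral_const_ball: "r \<ge> 0 \<Longrightarrow> integral (ball (0::R2) r) (\<lambda>x. c) = r\<^sup>2 * pi * c"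
  using integral_mult_left[of "ball (0::R2) r" "\<lambda>x. 1::real" c]
    lmeasure_integral[of "ball (0::R2) r"] circle_area[of r 0]
  by simp

lemma isCont_x_ln_x: "isCont (\<lambda>t::real. t * ln t) x"
proof (cases "x = 0")
  case True
  have "((\<lambda>t::real. t * ln (-t)) \<longlongrightarrow> 0) (at_left 0)" by real_asymp
  then have "((\<lambda>t::real. t * ln t) \<longlongrightarrow> 0) (at_left 0)" by (simp add: ln_minus)
  moreover have "((\<lambda>t::real. t * ln t) \<longlongrightarrow> 0) (at_right 0)" by real_asymp
  ultimately show ?thesis using True filterlim_split_at by (simp add: isCont_def)
qed (intro continuous_intros, auto)

lemma continuous_on_Gfun: "continuous_on S f \<Longrightarrow> continuous_on S (\<lambda>x. Gfun \<gamma> (f x))"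
proof -
  assume f: "continuous_on S f"
  have x_ln_x: "continuous_on S (\<lambda>x. f x * ln (f x))" if "continuous_on S f" for f :: "'a \<Rightarrow> real"
    using continuous_on_compose2[OF continuous_at_imp_continuous_on[OF ballI[OF isCont_x_ln_x]],
        of S f UNIV] that by auto
  have "(\<lambda>x. Gfun \<gamma> (f x)) = (\<lambda>x. \<gamma> * ((1 + f x) * ln (1 + f x)) + f x * ln (f x)
          - f x * (\<gamma> * (1 + ln 2) + 1) - \<gamma> * ln 2 + \<gamma> + 1)"
    by (simp add: Gfun_def algebra_simps)
  then show ?thesis by (simp only:) (intro continuous_intros x_ln_x f)
qed

lemma Gfun_le:
  assumes "\<gamma> \<ge> 0" and "0 \<le> t" "t \<le> U"
  shows "Gfun \<gamma> t \<le> (1 + \<gamma>) * t * ln (1 + U) + \<gamma> + 1"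
proof -
  have "\<gamma> * ln (1 + t) \<le> \<gamma> * t"
    using ln_le_minus_one[of "1 + t"] assms by (intro mult_left_mono) auto
  moreover have "\<gamma> * (t * ln (1 + t)) \<le> \<gamma> * (t * ln (1 + U))"
    using assms by (intro mult_left_mono) auto
  moreover have "t * ln t \<le> t * ln (1 + U)"
    using assms by (cases "t = 0") (auto intro: mult_left_mono)
  moreover have "\<gamma> * (t * ln 2) \<ge> 0" "\<gamma> * ln 2 \<ge> 0" using assms by simp_all
  moreover have "Gfun \<gamma> t = \<gamma> * ln (1 + t) + \<gamma> * (t * ln (1 + t)) + t * ln t - \<gamma> * t
      - \<gamma> * (t * ln 2) - t - \<gamma> * ln 2 + \<gamma> + 1"
    by (simp add: Gfun_def algebra_simps)
  moreover have "(1 + \<gamma>) * t * ln (1 + U) = t * ln (1 + U) + \<gamma> * (t * ln (1 + U))"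
    by (simp add: algebra_simps)
  ultimately show ?thesis using assms by linarith
qed

lemma ln_add_one_mult_power_le:
  fixes K b :: real
  assumes "K \<ge> 0" "b \<ge> 1"
  shows "ln (1 + K * b ^ n) \<le> ln (1 + K) + n * ln b"
proof -
  have "1 + K * b ^ n \<le> (1 + K) * b ^ n" using assms by (simp add: algebra_simps)
  then have "ln (1 + K * b ^ n) \<le> ln ((1 + K) * b ^ n)"
    using assms by (intro ln_mono) (auto intro: add_pos_nonneg)
  also have "\<dots> = ln (1 + K) + n * ln b" using assms by (simp add: ln_mult ln_realpow)
  finally show ?thesis .
qed

lemma ln_squared_le_sqrt: "t \<ge> 1 \<Longrightarrow> (ln t)\<^sup>2 \<le> 16 * sqrt t"
proof -
  assume t: "t \<ge> 1"
  define q where "q = sqrt (sqrt t)"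
  have "q ^ 4 = (q\<^sup>2)\<^sup>2" by simp
  then have q: "q > 0" "q ^ 4 = t" using t by (auto simp: q_def)
  have "ln t = 4 * ln q" using q by (metis ln_realpow of_nat_numeral)
  also have "\<dots> \<le> 4 * q" using ln_le_minus_one[OF q(1)] by simp
  finally have "(ln t)\<^sup>2 \<le> (4 * q)\<^sup>2" using t by (intro power_mono) auto
  also have "\<dots> = 16 * sqrt t" using t by (simp add: q_def power_mult_distrib)
  finally show ?thesis .
qed

lemma filterlim_at_bot_if_linear_bound:
  fixes f :: "nat \<Rightarrow> real"
  assumes "D < 0" and "\<And>k. f k \<le> C + real k * D"
  shows "filterlim f at_bot sequentially"
proof -
  have "filterlim (\<lambda>k. C + real k * D) at_bot sequentially" using assms(1) by real_asymp
  then show ?thesis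
    unfolding filterlim_at_bot by (metis (no_types, lifting) assms(2) eventually_mono order_trans)
qed

definition trunc_inv_power :: "nat \<Rightarrow> real \<Rightarrow> R2 \<Rightarrow> real" where
  "trunc_inv_power p e x = 1 / max (norm x) e ^ p"

lemma continuous_on_trunc_inv_power: "e > 0 \<Longrightarrow> continuous_on UNIV (trunc_inv_power p e)"
  unfolding trunc_inv_power_def by (intro continuous_intros) auto

text \<open>Lowering the truncation level from \<open>e\<close> to \<open>e'\<close> only changes the integrand on the
  disc of radius \<open>e\<close>, where it grows by at most \<open>1/e'\<^sup>p - 1/e\<^sup>p\<close>.\<close>
lemma integral_trunc_inv_power_le:
  assumes "0 < e'" "e' \<le> e" "e \<le> R"
  shows "integral (ball 0 R) (trunc_inv_power p e')
           \<le> integral (ball 0 R) (trunc_inv_power p e) + (1/e'^p - 1/e^p) * (e\<^sup>2 * pi)"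
proof -
  define c where "c = 1/e'^p - 1/e^p"
  define g where "g = (\<lambda>x::R2. if x \<in> ball 0 e then c else 0)"
  have sub: "ball (0::R2) e \<inter> ball 0 R = ball 0 e" using assms by auto
  have "(\<lambda>x::R2. c) integrable_on ball 0 e" by (rule integrable_on_const) simp
  then have g: "g integrable_on ball 0 R" "integral (ball 0 R) g = e\<^sup>2 * pi * c"
    using integrable_restrict_Int[of "ball (0::R2) e" "\<lambda>x. c" "ball 0 R"] integral_const_ball[of e c]
      assms
    by (simp_all only: g_def integral_restrict_Int sub)
  have h: "trunc_inv_power p e integrable_on ball 0 R" "trunc_inv_power p e' integrable_on ball 0 R"
    using assms by (auto intro!: continuous_on_integrable_on_ball continuous_on_trunc_inv_power)
  have "trunc_inv_power p e' x \<le> trunc_inv_power p e x + g x" if "x \<in> ball 0 R" for x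
  proof (cases "norm x < e")
    case True
    have "1 / max (norm x) e' ^ p \<le> 1 / e' ^ p"
      using assms(1) by (intro divide_left_mono power_mono) auto
    then show ?thesis using True by (simp add: trunc_inv_power_def g_def c_def max_def)
  next
    case False
    then have "max (norm x) e' = norm x" "max (norm x) e = norm x" using assms by auto
    then show ?thesis using False by (simp add: trunc_inv_power_def g_def)
  qed
  then have "integral (ball 0 R) (trunc_inv_power p e')
      \<le> integral (ball 0 R) (\<lambda>x. trunc_inv_power p e x + g x)"
    by (intro integral_le integrable_add h g)
  also have "\<dots> = integral (ball 0 R) (trunc_inv_power p e) + integral (ball 0 R) g"
    by (intro integral_add h g)
  finally show ?thesis using g by (simp add: c_def mult.commute)
qed

lemma integral_trunc_inv_power_at_R:
  assumes "R > 0"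
  shows "integral (ball 0 R) (trunc_inv_power p R) = R\<^sup>2 * pi / R ^ p"
proof -
  have "integral (ball 0 R) (trunc_inv_power p R) = integral (ball 0 R) (\<lambda>x::R2. 1 / R ^ p)"
    by (rule integral_cong) (simp add: trunc_inv_power_def max_def)
  then show ?thesis using integral_const_ball[of R] assms by simp
qed

lemma integral_trunc_inv_power_2_geometric_le:
  assumes "R > 0" "b > 1"
  shows "integral (ball 0 R) (trunc_inv_power 2 (R / b ^ k)) \<le> pi + k * pi * (b\<^sup>2 - 1)"
proof (induction k)
  case 0
  then show ?case using integral_trunc_inv_power_at_R[OF assms(1), of 2] assms by simp
next
  case (Suc k)
  have "b ^ k \<ge> 1" using assms by simp
  then have "R / b ^ Suc k \<le> R / b ^ k" "R / b ^ k \<le> R"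
    using assms by (auto simp: divide_le_eq frac_le)
  moreover have "(1 / (R / b ^ Suc k)\<^sup>2 - 1 / (R / b ^ k)\<^sup>2) * ((R / b ^ k)\<^sup>2 * pi) = pi * (b\<^sup>2 - 1)"
    using assms by (simp add: field_simps power_mult_distrib)
  ultimately show ?case
    using integral_trunc_inv_power_le[of "R / b ^ Suc k" "R / b ^ k" R 2] Suc assms
    by (simp add: algebra_simps)
qed

lemma integral_trunc_inv_power_1_geometric_le:
  assumes "R > 0" "b > 1"
  shows "integral (ball 0 R) (trunc_inv_power 1 (R / b ^ k)) \<le> pi * R * (1 + b) - pi * R * b / b ^ k"
proof (induction k)
  case 0
  then show ?case using integral_trunc_inv_power_at_R[OF assms(1), of 1] assms
    by (simp add: power2_eq_square algebra_simps)
next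
  case (Suc k)
  have "b ^ k \<ge> 1" using assms by simp
  then have "R / b ^ Suc k \<le> R / b ^ k" "R / b ^ k \<le> R"
    using assms by (auto simp: divide_le_eq frac_le)
  moreover have "(1 / (R / b ^ Suc k) ^ 1 - 1 / (R / b ^ k) ^ 1) * ((R / b ^ k)\<^sup>2 * pi)
      = pi * R * b / b ^ k - pi * R * b / b ^ Suc k"
    using assms by (simp add: field_simps power2_eq_square)
  ultimately show ?case
    using integral_trunc_inv_power_le[of "R / b ^ Suc k" "R / b ^ k" R 1] Suc assms by simp
qed

locale concentrating_pair =
  fixes R b m A :: real
  assumes R_pos: "R > 0" and b_gt_1: "b > 1" and m_pos: "m > 0" and A_pos: "A > 0"
begin

definition scale :: "nat \<Rightarrow> real" where
  "scale k = R / b ^ k"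

definition tent :: "nat \<Rightarrow> R2 \<Rightarrow> real" where
  "tent k x = max 0 (1 - norm x / scale k)"

definition tent_mass :: "nat \<Rightarrow> real" where
  "tent_mass k = integral (ball 0 R) (tent k)"

definition u :: "nat \<Rightarrow> R2 \<Rightarrow> real" where
  "u k x = m / tent_mass k * tent k x"

definition v :: "nat \<Rightarrow> R2 \<Rightarrow> real" where
  "v k x = A / 2 * ln ((R\<^sup>2 + (scale k)\<^sup>2) / (x \<bullet> x + (scale k)\<^sup>2))"

lemma scale_pos: "scale k > 0" and scale_le: "scale k \<le> R"
  using R_pos b_gt_1 one_le_power[of b k] by (auto simp: scale_def divide_le_eq)

lemma continuous_tent: "continuous_on UNIV (tent k)"
  using scale_pos[of k] unfolding tent_def by (intro continuous_intros) auto

lemma tent_mass_ge: "tent_mass k \<ge> pi * (scale k)\<^sup>2 / 8"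
proof -
  define e where "e = scale k"
  have e: "0 < e" "e \<le> R" using scale_pos scale_le by (auto simp: e_def)
  define g where "g = (\<lambda>x::R2. if x \<in> ball 0 (e/2) then 1/2 else (0::real))"
  have sub: "ball (0::R2) (e/2) \<inter> ball 0 R = ball 0 (e/2)" using e by auto
  have "(\<lambda>x::R2. 1/2::real) integrable_on ball 0 (e/2)" by (rule integrable_on_const) simp
  then have g: "g integrable_on ball 0 R" "integral (ball 0 R) g = (e/2)\<^sup>2 * pi * (1/2)"
    using integrable_restrict_Int[of "ball (0::R2) (e/2)" "\<lambda>x. 1/2::real" "ball 0 R"]
      integral_const_ball[of "e/2" "1/2"] e
    by (simp_all only: g_def integral_restrict_Int sub)
  have "g x \<le> tent k x" for x
    using e by (auto simp: g_def tent_def e_def[symmetric] field_simps)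
  then have "integral (ball 0 R) g \<le> tent_mass k"
    unfolding tent_mass_def
    by (intro integral_le g continuous_on_integrable_on_ball continuous_tent)
  then show ?thesis using g by (simp add: e_def power2_eq_square mult.commute)
qed

lemma tent_mass_pos: "tent_mass k > 0"
proof -
  have "0 < pi * (scale k)\<^sup>2 / 8" using scale_pos[of k] by simp
  then show ?thesis using tent_mass_ge[of k] by linarith
qed

lemma continuous_u: "continuous_on UNIV (u k)"
  unfolding u_def[abs_def] by (rule continuous_on_mult_left[OF continuous_tent])

lemma integral_u: "integral (ball 0 R) (u k) = m"
  using tent_mass_pos[of k] by (simp add: u_def[abs_def] tent_mass_def)

lemma u_nonneg: "u k x \<ge> 0"
  using tent_mass_pos[of k] m_pos by (simp add: u_def tent_def)

lemma u_le: "u k x \<le> 8 * m / (pi * R\<^sup>2) * b ^ (2 * k)"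
proof -
  have "tent k x \<le> 1" using scale_pos[of k] by (simp add: tent_def)
  then have "u k x \<le> m / tent_mass k"
    using tent_mass_pos[of k] m_pos mult_left_mono[of "tent k x" 1 "m / tent_mass k"]
    by (simp add: u_def)
  also have "\<dots> \<le> m / (pi * (scale k)\<^sup>2 / 8)"
    using tent_mass_ge[of k] tent_mass_pos[of k] scale_pos[of k] m_pos
    by (intro divide_left_mono) auto
  also have "\<dots> = 8 * m / (pi * R\<^sup>2) * b ^ (2 * k)"
    using R_pos b_gt_1 by (simp add: scale_def power_divide power_mult field_simps)
  finally show ?thesis .
qed

lemma u_eq_0: "norm x \<ge> scale k \<Longrightarrow> u k x = 0"
  using scale_pos[of k] by (simp add: u_def tent_def field_simps)

lemma v_has_derivative:
  "(v k has_derivative (\<lambda>h. - A * (x \<bullet> h) / (x \<bullet> x + (scale k)\<^sup>2))) (at x)"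
proof -
  define e where "e = scale k"
  have pos: "y \<bullet> y + e\<^sup>2 > 0" for y :: R2
    using scale_pos[of k] by (simp add: e_def add_nonneg_pos)
  have "v k y = A / 2 * (ln (R\<^sup>2 + e\<^sup>2) - ln (y \<bullet> y + e\<^sup>2))" for y
    using pos[of y] R_pos by (simp add: v_def e_def ln_div add_pos_pos)
  then have v: "v k = (\<lambda>y. A / 2 * (ln (R\<^sup>2 + e\<^sup>2) - ln (y \<bullet> y + e\<^sup>2)))" by blast
  have "((\<lambda>y::R2. y \<bullet> y + e\<^sup>2) has_derivative (\<lambda>h. x \<bullet> h + h \<bullet> x)) (at x)"
    by (auto intro!: derivative_eq_intros)
  from DERIV_compose_FDERIV[OF DERIV_ln[OF pos[of x]] this]
  have "((\<lambda>y::R2. ln (y \<bullet> y + e\<^sup>2)) has_derivative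
          (\<lambda>h. (x \<bullet> h + h \<bullet> x) / (x \<bullet> x + e\<^sup>2))) (at x)"
    by (simp add: divide_inverse mult.commute)
  then have "(v k has_derivative (\<lambda>h. A / 2 * (0 - (x \<bullet> h + h \<bullet> x) / (x \<bullet> x + e\<^sup>2)))) (at x)"
    unfolding v by (intro has_derivative_mult_right has_derivative_diff has_derivative_const)
  then show ?thesis
    using pos[of x] by (simp add: e_def inner_commute field_simps)
qed

lemma continuous_v: "continuous_on UNIV (v k)"
  using v_has_derivative has_derivative_continuous
  by (blast intro: continuous_at_imp_continuous_on)

lemma grad_sq_v: "grad_sq (v k) x = A\<^sup>2 * (x \<bullet> x) / (x \<bullet> x + (scale k)\<^sup>2)\<^sup>2"
proof -
  have "frechet_derivative (v k) (at x) = (\<lambda>h. - A * (x \<bullet> h) / (x \<bullet> x + (scale k)\<^sup>2))"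
    using frechet_derivative_at[OF v_has_derivative] by simp
  then have "grad_sq (v k) x = (\<Sum>i\<in>UNIV. A\<^sup>2 / (x \<bullet> x + (scale k)\<^sup>2)\<^sup>2 * (x $ i * x $ i))"
    unfolding grad_sq_def
    by (intro sum.cong) (auto simp: inner_axis power2_eq_square field_simps)
  also have "\<dots> = A\<^sup>2 / (x \<bullet> x + (scale k)\<^sup>2)\<^sup>2 * (\<Sum>i\<in>UNIV. x $ i * x $ i)"
    by (rule sum_distrib_left[symmetric])
  also have "\<dots> = A\<^sup>2 * (x \<bullet> x) / (x \<bullet> x + (scale k)\<^sup>2)\<^sup>2"
    by (simp add: inner_vec_def)
  finally show ?thesis .
qed

lemma continuous_grad_sq_v: "continuous_on UNIV (grad_sq (v k))"
proof -
  have "(x \<bullet> x + (scale k)\<^sup>2)\<^sup>2 \<noteq> 0" for x :: R2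
    using scale_pos[of k] by (simp add: add_nonneg_pos less_imp_neq[symmetric])
  then show ?thesis unfolding grad_sq_v[abs_def] by (intro continuous_intros) auto
qed

lemma v_nonneg: "x \<in> ball 0 R \<Longrightarrow> v k x \<ge> 0"
proof -
  assume "x \<in> ball 0 R"
  then have "x \<bullet> x \<le> R\<^sup>2" by (simp add: power2_norm_eq_inner[symmetric] power_mono)
  moreover have "x \<bullet> x + (scale k)\<^sup>2 > 0" using scale_pos[of k] by (simp add: add_nonneg_pos)
  ultimately show ?thesis using A_pos by (simp add: v_def)
qed

lemma v_ge_on_support:
  assumes "norm x \<le> scale k"
  shows "A * (k * ln b - ln 2 / 2) \<le> v k x"
proof -
  define e where "e = scale k"
  have e: "e > 0" using scale_pos by (simp add: e_def)
  have "x \<bullet> x \<le> e\<^sup>2" using assms by (simp add: e_def power2_norm_eq_inner[symmetric] power_mono)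
  then have "R\<^sup>2 / (2 * e\<^sup>2) \<le> (R\<^sup>2 + e\<^sup>2) / (x \<bullet> x + e\<^sup>2)"
    using e by (intro frac_le) (auto simp: add_nonneg_pos)
  then have "ln (R\<^sup>2 / (2 * e\<^sup>2)) \<le> ln ((R\<^sup>2 + e\<^sup>2) / (x \<bullet> x + e\<^sup>2))"
    using e R_pos by (intro ln_mono) auto
  moreover have "R\<^sup>2 / (2 * e\<^sup>2) = b ^ (2 * k) / 2"
    using R_pos b_gt_1 by (simp add: e_def scale_def power_divide power_mult field_simps)
  then have "ln (R\<^sup>2 / (2 * e\<^sup>2)) = ln (b ^ (2 * k) / 2)" by (simp only:)
  also have "\<dots> = 2 * k * ln b - ln 2" using b_gt_1 by (simp add: ln_div ln_realpow)
  ultimately have "A / 2 * (2 * k * ln b - ln 2) \<le> v k x"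
    unfolding v_def e_def using A_pos by (intro mult_left_mono) auto
  then show ?thesis by (simp add: field_simps)
qed

lemma grad_sq_v_le: "grad_sq (v k) x \<le> A\<^sup>2 * trunc_inv_power 2 (scale k) x"
proof -
  define e where "e = scale k"
  define s where "s = x \<bullet> x"
  define M where "M = max (norm x) e"
  have "e > 0" "s \<ge> 0" using scale_pos by (simp_all add: e_def s_def)
  then have M: "M > 0" "M\<^sup>2 \<le> s + e\<^sup>2"
    by (auto simp: M_def s_def max_def power2_norm_eq_inner[symmetric])
  have "s * M\<^sup>2 \<le> (s + e\<^sup>2)\<^sup>2"
    using M \<open>s \<ge> 0\<close> mult_mono[of s "s + e\<^sup>2" "M\<^sup>2" "s + e\<^sup>2"] by (simp add: power2_eq_square)
  moreover have "s + e\<^sup>2 > 0" using \<open>e > 0\<close> \<open>s \<ge> 0\<close> by (simp add: add_nonneg_pos)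
  ultimately have "s / (s + e\<^sup>2)\<^sup>2 \<le> 1 / M\<^sup>2" using M by (simp add: field_simps)
  then have "A\<^sup>2 * (s / (s + e\<^sup>2)\<^sup>2) \<le> A\<^sup>2 * (1 / M\<^sup>2)" by (rule mult_left_mono) simp
  then show ?thesis
    by (simp add: grad_sq_v trunc_inv_power_def e_def[symmetric] s_def[symmetric] M_def[symmetric])
qed

lemma v_squared_le: "x \<in> ball 0 R \<Longrightarrow> (v k x)\<^sup>2 \<le> 8 * A\<^sup>2 * R * trunc_inv_power 1 (scale k) x"
proof -
  assume x: "x \<in> ball 0 R"
  define e where "e = scale k"
  define s where "s = x \<bullet> x"
  define M where "M = max (norm x) e"
  define t where "t = (R\<^sup>2 + e\<^sup>2) / (s + e\<^sup>2)"
  have e: "e > 0" "e \<le> R" using scale_pos scale_le by (auto simp: e_def)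
  have s: "0 \<le> s" "s \<le> R\<^sup>2"
    using x by (auto simp: s_def power2_norm_eq_inner[symmetric] power_mono)
  have M: "M > 0" "M\<^sup>2 \<le> s + e\<^sup>2"
    using e by (auto simp: M_def s_def max_def power2_norm_eq_inner[symmetric])
  have "t \<ge> 1" using s e by (simp add: t_def add_nonneg_pos)
  have "t \<le> 2 * R\<^sup>2 / M\<^sup>2"
    using e s M by (simp add: t_def frac_le add_nonneg_pos power_mono)
  also have "\<dots> \<le> (2 * R / M)\<^sup>2" using M by (simp add: power_divide field_simps)
  finally have "sqrt t \<le> 2 * R / M"
    using R_pos M by (simp add: real_le_lsqrt)
  then have "(ln t)\<^sup>2 \<le> 32 * R / M" using ln_squared_le_sqrt[OF \<open>t \<ge> 1\<close>] by linarith
  then have "A\<^sup>2 / 4 * (ln t)\<^sup>2 \<le> A\<^sup>2 / 4 * (32 * R / M)" by (intro mult_left_mono) auto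
  moreover have "(v k x)\<^sup>2 = A\<^sup>2 / 4 * (ln t)\<^sup>2"
    by (simp add: v_def t_def s_def e_def power_mult_distrib power_divide)
  moreover have "A\<^sup>2 / 4 * (32 * R / M) = 8 * A\<^sup>2 * R * trunc_inv_power 1 (scale k) x"
    by (simp add: trunc_inv_power_def M_def e_def)
  ultimately show ?thesis by linarith
qed

lemma admissible_u_v: "admissible \<gamma> R (u k) (v k)"
proof -
  have cball: "continuous_on (cball 0 R) f" if "continuous_on UNIV f" for f :: "R2 \<Rightarrow> real"
    using that by (rule continuous_on_subset) simp
  have "radial_on (ball 0 R) (u k)" "radial_on (ball 0 R) (v k)"
    by (auto simp: radial_on_def u_def tent_def v_def power2_norm_eq_inner[symmetric])
  moreover have "v k differentiable (at x)" for x
    using v_has_derivative by (auto simp: differentiable_def)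
  ultimately show ?thesis
    unfolding admissible_def
    by (auto intro!: cball continuous_on_cball_absolutely_integrable_on_ball continuous_intros
        continuous_u continuous_v continuous_on_Gfun continuous_grad_sq_v u_nonneg v_nonneg)
qed

lemma integral_Gfun_u_le:
  assumes "\<gamma> \<ge> 0"
  shows "integral (ball 0 R) (\<lambda>x. Gfun \<gamma> (u k x))
           \<le> (1 + \<gamma>) * m * (ln (1 + 8 * m / (pi * R\<^sup>2)) + 2 * real k * ln b) + (1 + \<gamma>) * (pi * R\<^sup>2)"
proof -
  define L where "L = ln (1 + 8 * m / (pi * R\<^sup>2) * b ^ (2 * k))"
  have u: "(\<lambda>x. (1 + \<gamma>) * L * u k x) integrable_on ball 0 R"
    by (intro integrable_on_mult_right continuous_on_integrable_on_ball continuous_u)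
  have c: "(\<lambda>x::R2. \<gamma> + 1) integrable_on ball 0 R"
    by (rule integrable_on_const) (simp add: bounded_set_imp_lmeasurable)
  have bound: "(\<lambda>x. (1 + \<gamma>) * L * u k x + (\<gamma> + 1)) integrable_on ball 0 R"
    by (rule integrable_add[OF u c])
  have "integral (ball 0 R) (\<lambda>x. Gfun \<gamma> (u k x))
      \<le> integral (ball 0 R) (\<lambda>x. (1 + \<gamma>) * L * u k x + (\<gamma> + 1))"
    using Gfun_le[OF assms u_nonneg u_le]
    by (intro integral_le bound continuous_on_integrable_on_ball continuous_on_Gfun continuous_u)
       (simp add: L_def algebra_simps)
  also have "\<dots> = (1 + \<gamma>) * L * m + (1 + \<gamma>) * (pi * R\<^sup>2)"
    using integral_const_ball[of R "\<gamma> + 1"] R_pos by (simp add: integral_add[OF u c] integral_u)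
  also have "(1 + \<gamma>) * L * m \<le> (1 + \<gamma>) * m * (ln (1 + 8 * m / (pi * R\<^sup>2)) + 2 * real k * ln b)"
  proof -
    have "L \<le> ln (1 + 8 * m / (pi * R\<^sup>2)) + 2 * real k * ln b"
      using ln_add_one_mult_power_le[of "8 * m / (pi * R\<^sup>2)" b "2 * k"] m_pos b_gt_1
      by (simp add: L_def)
    then show ?thesis using mult_left_mono[of L _ "(1 + \<gamma>) * m"] assms m_pos by (simp add: mult_ac)
  qed
  finally show ?thesis by simp
qed

lemma integral_u_v_ge: "integral (ball 0 R) (\<lambda>x. u k x * v k x) \<ge> m * A * (k * ln b - ln 2 / 2)"
proof -
  have "u k x * (A * (k * ln b - ln 2 / 2)) \<le> u k x * v k x" for x
    using v_ge_on_support[of x k] u_eq_0[of k x] u_nonneg[of k x]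
    by (cases "norm x \<le> scale k") (auto intro: mult_left_mono)
  then have "integral (ball 0 R) (\<lambda>x. u k x * (A * (k * ln b - ln 2 / 2)))
      \<le> integral (ball 0 R) (\<lambda>x. u k x * v k x)"
    by (intro integral_le continuous_on_integrable_on_ball continuous_intros continuous_u continuous_v)
  then show ?thesis by (simp add: integral_u)
qed

lemma integral_grad_sq_v_le:
  "integral (ball 0 R) (grad_sq (v k)) \<le> A\<^sup>2 * (pi + k * pi * (b\<^sup>2 - 1))"
proof -
  have "integral (ball 0 R) (grad_sq (v k))
      \<le> integral (ball 0 R) (\<lambda>x. A\<^sup>2 * trunc_inv_power 2 (scale k) x)"
    by (intro integral_le grad_sq_v_le continuous_on_integrable_on_ball continuous_intros
        continuous_grad_sq_v continuous_on_trunc_inv_power scale_pos)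
  also have "\<dots> \<le> A\<^sup>2 * (pi + k * pi * (b\<^sup>2 - 1))"
    using integral_trunc_inv_power_2_geometric_le[OF R_pos b_gt_1, of k]
    by (simp add: scale_def mult_left_mono)
  finally show ?thesis .
qed

lemma integral_v_squared_le:
  "integral (ball 0 R) (\<lambda>x. (v k x)\<^sup>2) \<le> 8 * A\<^sup>2 * R * (pi * R * (1 + b))"
proof -
  have "integral (ball 0 R) (\<lambda>x. (v k x)\<^sup>2)
      \<le> integral (ball 0 R) (\<lambda>x. 8 * A\<^sup>2 * R * trunc_inv_power 1 (scale k) x)"
    by (intro integral_le v_squared_le continuous_on_integrable_on_ball continuous_intros
        continuous_v continuous_on_trunc_inv_power scale_pos)
  also have "\<dots> = 8 * A\<^sup>2 * R * integral (ball 0 R) (trunc_inv_power 1 (scale k))" by simp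
  also have "\<dots> \<le> 8 * A\<^sup>2 * R * (pi * R * (1 + b))"
  proof (intro mult_left_mono)
    have "0 \<le> pi * R * b / b ^ k" using R_pos b_gt_1 by simp
    then show "integral (ball 0 R) (trunc_inv_power 1 (scale k)) \<le> pi * R * (1 + b)"
      using integral_trunc_inv_power_1_geometric_le[OF R_pos b_gt_1, of k] by (simp add: scale_def)
  qed (use R_pos in auto)
  finally show ?thesis .
qed

lemma Ffun_u_v_le:
  assumes "\<gamma> \<ge> 0"
  shows "Ffun \<gamma> R (u k) (v k)
    \<le> (1 + \<gamma>) * m * ln (1 + 8 * m / (pi * R\<^sup>2)) + (1 + \<gamma>) * (pi * R\<^sup>2) + m * A * ln 2 / 2
        + A\<^sup>2 * pi / 2 + 4 * A\<^sup>2 * R * (pi * R * (1 + b))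
      + k * (2 * (1 + \<gamma>) * m * ln b - m * A * ln b + A\<^sup>2 * pi * (b\<^sup>2 - 1) / 2)"
    (is "_ \<le> ?bound")
proof -
  have "Ffun \<gamma> R (u k) (v k)
      \<le> (1 + \<gamma>) * m * (ln (1 + 8 * m / (pi * R\<^sup>2)) + 2 * real k * ln b) + (1 + \<gamma>) * (pi * R\<^sup>2)
        - m * A * (k * ln b - ln 2 / 2) + A\<^sup>2 * (pi + k * pi * (b\<^sup>2 - 1)) / 2
        + 8 * A\<^sup>2 * R * (pi * R * (1 + b)) / 2"
    using integral_Gfun_u_le[OF assms, of k] integral_u_v_ge[of k]
      integral_grad_sq_v_le[of k] integral_v_squared_le[of k]
    unfolding Ffun_def by linarith
  also have "\<dots> = ?bound" by (simp add: field_simps)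
  finally show ?thesis .
qed

end

text \<open>With \<open>A = m/(2\<pi>)\<close> the slope equals \<open>m/(8\<pi>) \<cdot> (m(b\<^sup>2-1) - (4m - 2c) ln b)\<close>, where
  \<open>c = 8\<pi>(1+\<gamma>)\<close>; since \<open>ln b \<ge> (b-1)/b\<close>, it is negative as soon as
  \<open>m b (b+1) < 4m - 2c\<close>, which holds for \<open>b - 1 = (m-c)/(4m)\<close>.\<close>
lemma energy_slope_neg:
  fixes \<gamma> m :: real
  assumes "\<gamma> \<ge> 0" and "m > 8 * pi * (1 + \<gamma>)"
  defines "b \<equiv> 1 + (m - 8 * pi * (1 + \<gamma>)) / (4 * m)" and "A \<equiv> m / (2 * pi)"
  shows "2 * (1 + \<gamma>) * m * ln b - m * A * ln b + A\<^sup>2 * pi * (b\<^sup>2 - 1) / 2 < 0"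
proof -
  define c where "c = 8 * pi * (1 + \<gamma>)"
  define \<delta> where "\<delta> = (m - c) / (4 * m)"
  have c: "0 < c" "c < m" using assms by (simp_all add: c_def add_pos_pos)
  then have m: "m > 0" by linarith
  have \<delta>: "0 < \<delta>" "\<delta> < 1/4" using c by (simp_all add: \<delta>_def field_simps)
  have b: "b = 1 + \<delta>" by (simp add: b_def \<delta>_def c_def)
  have "\<delta> * \<delta> < \<delta>" using \<delta> by (simp add: mult_less_cancel_left1)
  then have "m * ((2 + \<delta>) * (1 + \<delta>)) < m * (2 + 4 * \<delta>)"
    using m by (intro mult_strict_left_mono) (simp_all add: algebra_simps)
  also have "m * (2 + 4 * \<delta>) = 3 * m - c" using m by (simp add: \<delta>_def field_simps)
  finally have "m * (2 + \<delta>) * (1 + \<delta>) < 4 * m - 2 * c" using c by (simp add: mult.assoc)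
  from mult_strict_left_mono[OF this \<delta>(1)]
  have "m * (b\<^sup>2 - 1) * (1 + \<delta>) < \<delta> * (4 * m - 2 * c)"
    by (simp add: b power2_eq_square algebra_simps)
  then have "m * (b\<^sup>2 - 1) < (4 * m - 2 * c) * ((b - 1) / b)"
    using \<delta> by (simp add: b field_simps)
  also have "\<dots> \<le> (4 * m - 2 * c) * ln b"
    using ln_diff_le[of 1 b] \<delta> c by (intro mult_left_mono) (simp_all add: b)
  finally have "m / (8 * pi) * (m * (b\<^sup>2 - 1) - (4 * m - 2 * c) * ln b) < 0"
    using m by (intro mult_pos_neg) auto
  moreover have "2 * (1 + \<gamma>) * m * ln b - m * A * ln b + A\<^sup>2 * pi * (b\<^sup>2 - 1) / 2
      = m / (8 * pi) * (m * (b\<^sup>2 - 1) - (4 * m - 2 * c) * ln b)"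
    by (simp add: A_def c_def field_simps power2_eq_square)
  ultimately show ?thesis by simp
qed

theorem lemma4p7:
  fixes \<gamma> R m :: real
  assumes "\<gamma> > 0" and "R > 0" and "m > 8 * pi * (1 + \<gamma>)"
  shows "\<exists>u v :: nat \<Rightarrow> R2 \<Rightarrow> real.
           (\<forall>k. admissible \<gamma> R (u k) (v k) \<and> integral (ball 0 R) (u k) = m) \<and>
           filterlim (\<lambda>k. Ffun \<gamma> R (u k) (v k)) at_bot sequentially"
proof -
  define b where "b = 1 + (m - 8 * pi * (1 + \<gamma>)) / (4 * m)"
  define A where "A = m / (2 * pi)"
  have \<gamma>: "\<gamma> \<ge> 0" using assms(1) by simp
  have "8 * pi * (1 + \<gamma>) > 0" using \<gamma> by (simp add: add_pos_nonneg)
  then have m: "m > 0" using assms(3) by linarith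
  interpret concentrating_pair R b m A
    using assms m by unfold_locales (simp_all add: b_def A_def)
  have "filterlim (\<lambda>k. Ffun \<gamma> R (u k) (v k)) at_bot sequentially"
    using energy_slope_neg[OF \<gamma> assms(3)] Ffun_u_v_le[OF \<gamma>]
    by (intro filterlim_at_bot_if_linear_bound) (simp_all add: b_def A_def)
  then show ?thesis using admissible_u_v integral_u by blast
qed

end
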